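(* Let $A\subset B$ be a finite set which is both $v$-connected and $w$-connected for two vertices $v,w$ of $T$. Then $\mu^{A,v}=\mu^{A,w}$.
   Context: Setting: $B=\mathbb{QP}^1$, the vertex set of the Farey tessellation of $\mathbb H^2$, with dual trivalent tree $T$; tribones (counterclockwise-ordered vertex triples of the triangles, up to cyclic permutation) and quadribones ($(a,b,c,d)$ with $(a,b,c),(d,c,b)$ the oriented tribones of the endpoints of an edge, up to $(a,b,c,d)\mapsto(d,c,b,a)$). $A$ is $v$-connected if it is a union of quadribones whose edges form a connected subset of $T$ containing $v$. Given a (3,4)-measured configuration data $(W,\Gamma,O_3,O_4,\mu^3,\mu^4)$ (with $\mu^3$ invariant under cyclic permutations, $\mu^4$ invariant under $(a,b,c,d)\mapsto(d,c,b,a)$, $p_*\mu^4=\mu^3$ for $p(a,b,c,d)=(a,b,c)$) and the disintegration kernel $\nu_{(a,b,c)}$ of $\mu^4$ over $\mu^3$, for a finite $u$-connected set $A$ the measure $\mu^{A,u}$ on $\mathcal W(A)=W^A$ is defined by: start with $\mu^3$ transported to $W^{t_u}$ via the tribone $t_u$ of $u$, then successively add points $a\notin C$ such that $t\cup\{a\}$ is a quadribone $(x,y,z,a)$ for some tribone $t=(x,y,z)\subset C$, setting $\mu^{C\cup\{a\}}=\int\delta_f\otimes\nu_{(f(x),f(y),f(z))}\,d\mu^{C}(f)$, until $A$ is reached (the result does not depend on the order of the additions). *)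

theory Defs
  imports "HOL-Probability.Probability"
begin

text \<open>QP^1 = Q together with a point at infinity (None).  A point is given by its
  reduced integer coordinates (p,q); infinity is (1,0).\<close>

type_synonym qp1 = "rat option"

definition fcoord :: "qp1 \<Rightarrow> int \<times> int" where
  "fcoord a = (case a of None \<Rightarrow> (1, 0) | Some x \<Rightarrow> quotient_of x)"

definition farey_adj :: "qp1 \<Rightarrow> qp1 \<Rightarrow> bool" where
  "farey_adj a b \<longleftrightarrow> (case fcoord a of (p, q) \<Rightarrow> case fcoord b of (r, s) \<Rightarrow> \<bar>p * s - q * r\<bar> = 1)"

text \<open>Order on the boundary line R \<union> {\<infinity>}, with \<infinity> on top; the counterclockwise cyclic
  order on the boundary circle of the upper half plane is the cyclic order induced by it.\<close>
definition qlt :: "qp1 \<Rightarrow> qp1 \<Rightarrow> bool" where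
  "qlt a b \<longleftrightarrow> (case (a, b) of (Some x, Some y) \<Rightarrow> x < y | (Some _, None) \<Rightarrow> True | _ \<Rightarrow> False)"

definition ccw :: "qp1 \<Rightarrow> qp1 \<Rightarrow> qp1 \<Rightarrow> bool" where
  "ccw a b c \<longleftrightarrow> (qlt a b \<and> qlt b c) \<or> (qlt b c \<and> qlt c a) \<or> (qlt c a \<and> qlt a b)"

text \<open>Oriented tribone (a representative of the cyclic class): vertices of a Farey
  triangle in counterclockwise order.\<close>
definition tribone :: "qp1 \<Rightarrow> qp1 \<Rightarrow> qp1 \<Rightarrow> bool" where
  "tribone x y z \<longleftrightarrow> farey_adj x y \<and> farey_adj y z \<and> farey_adj z x \<and> ccw x y z"

definition quadribone :: "qp1 \<Rightarrow> qp1 \<Rightarrow> qp1 \<Rightarrow> qp1 \<Rightarrow> bool" where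
  "quadribone a b c d \<longleftrightarrow> tribone a b c \<and> tribone d c b"

text \<open>Vertices of the dual tree T: the Farey triangles (as vertex sets).\<close>
definition farey_triangles :: "qp1 set set" where
  "farey_triangles = {{x, y, z} | x y z. tribone x y z}"

definition tree_edges :: "qp1 set set set" where
  "tree_edges = {{s, t} | s t. s \<in> farey_triangles \<and> t \<in> farey_triangles \<and> card (s \<inter> t) = 2}"

text \<open>A is v-connected: A is the union of the quadribones (= unions of the two endpoint
  triangles) of a set E of edges of T which forms a connected subset of T containing v.\<close>
definition vconnected :: "qp1 set \<Rightarrow> qp1 set \<Rightarrow> bool" where
  "vconnected A v \<longleftrightarrow> (\<exists>E. E \<subseteq> tree_edges \<and> A = \<Union>(\<Union>E) \<and> v \<in> \<Union>E \<and>
      (\<forall>s\<in>\<Union>E. \<forall>t\<in>\<Union>E. (s, t) \<in> {(s', t'). {s', t'} \<in> E}\<^sup>*))"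

definition tri_init :: "'w measure \<Rightarrow> ('w \<times> 'w \<times> 'w) measure \<Rightarrow> qp1 \<Rightarrow> qp1 \<Rightarrow> qp1
    \<Rightarrow> (qp1 \<Rightarrow> 'w) measure" where
  "tri_init W mu3 x y z = distr mu3 (PiM {x, y, z} (\<lambda>_. W))
     (\<lambda>(p, q, r). (\<lambda>i\<in>{x, y, z}. if i = x then p else if i = y then q else r))"

text \<open>mu^{C \<union> {a}} = \<integral> \<delta>_f \<otimes> \<nu>_(f x, f y, f z) d mu^C (f).\<close>
definition kext :: "'w measure \<Rightarrow> ('w \<times> 'w \<times> 'w \<Rightarrow> 'w measure) \<Rightarrow> qp1 set
    \<Rightarrow> (qp1 \<Rightarrow> 'w) measure \<Rightarrow> qp1 \<Rightarrow> qp1 \<Rightarrow> qp1 \<Rightarrow> qp1 \<Rightarrow> (qp1 \<Rightarrow> 'w) measure" where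
  "kext W nu C m x y z a = measure_of (space (PiM (insert a C) (\<lambda>_. W)))
     (sets (PiM (insert a C) (\<lambda>_. W)))
     (\<lambda>S. \<integral>\<^sup>+ f. emeasure (nu (f x, f y, f z)) ((\<lambda>w. f(a := w)) -` S \<inter> space W) \<partial>m)"

text \<open>mu_build W mu3 nu u C m: m is a measure on W^C obtained by the successive-addition
  construction starting from the tribone of the vertex u of T.\<close>
inductive mu_build :: "'w measure \<Rightarrow> ('w \<times> 'w \<times> 'w) measure \<Rightarrow> ('w \<times> 'w \<times> 'w \<Rightarrow> 'w measure)
    \<Rightarrow> qp1 set \<Rightarrow> qp1 set \<Rightarrow> (qp1 \<Rightarrow> 'w) measure \<Rightarrow> bool"
  for W mu3 nu u where
  base: "tribone x y z \<Longrightarrow> u = {x, y, z} \<Longrightarrow> mu_build W mu3 nu u {x, y, z} (tri_init W mu3 x y z)"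
| step: "mu_build W mu3 nu u C m \<Longrightarrow> x \<in> C \<Longrightarrow> y \<in> C \<Longrightarrow> z \<in> C \<Longrightarrow> a \<notin> C \<Longrightarrow>
     quadribone x y z a \<Longrightarrow> mu_build W mu3 nu u (insert a C) (kext W nu C m x y z a)"

end

theory Submission
  imports Defs
begin

text \<open>A set built by successive additions is Farey-convex: each of its boundary sides cuts off an
  arc of the circle containing none of its points. Hence the vertex added last is an ear, the only
  point of the set beyond its base edge, and any other construction of the same set can be
  reordered so that this ear comes last: additions at two different places commute by Fubini, and
  when the set consists of just two triangles, the two ways of building it agree because \<open>mu4\<close> is
  invariant under reversal and disintegrates over \<open>mu3\<close> along \<open>nu\<close>. With the cyclic invariance of
  \<open>mu3\<close> for the starting triangle, induction on the construction shows that the measure depends on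
  the set alone.\<close>

section \<open>Cyclic order on the boundary and Farey edges\<close>

text \<open>An order embedding of \<open>qlt\<close> into the reals, which turns all reasoning about \<open>ccw\<close> into
  linear arithmetic.\<close>

definition boundary_angle :: "qp1 \<Rightarrow> real" where
  "boundary_angle a = (case a of None \<Rightarrow> pi / 2 | Some x \<Rightarrow> arctan (real_of_rat x))"

lemma boundary_angle_less_infinity: "boundary_angle (Some x) < boundary_angle None"
  using arctan_ubound by (simp add: boundary_angle_def)

lemma qlt_iff_boundary_angle: "qlt a b \<longleftrightarrow> boundary_angle a < boundary_angle b"
proof (cases a; cases b)
  fix x y assume "a = Some x" "b = Some y"
  then show ?thesis by (simp add: qlt_def boundary_angle_def arctan_less_iff of_rat_less)
qed (auto simp: qlt_def boundary_angle_less_infinity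
    dest: order.asym[OF boundary_angle_less_infinity])

lemma boundary_angle_eq_iff: "boundary_angle a = boundary_angle b \<longleftrightarrow> a = b"
proof (cases a; cases b)
  fix x y assume "a = Some x" "b = Some y"
  then show ?thesis by (simp add: boundary_angle_def arctan_eq_iff)
qed (metis boundary_angle_less_infinity less_irrefl option.distinct(1))+

lemma ccw_iff_boundary_angle:
  "ccw a b c \<longleftrightarrow>
     (boundary_angle a < boundary_angle b \<and> boundary_angle b < boundary_angle c) \<or>
     (boundary_angle b < boundary_angle c \<and> boundary_angle c < boundary_angle a) \<or>
     (boundary_angle c < boundary_angle a \<and> boundary_angle a < boundary_angle b)"
  by (simp add: ccw_def qlt_iff_boundary_angle)

lemmas ccw_as_angles = ccw_iff_boundary_angle boundary_angle_eq_iff[symmetric]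

lemma ccw_distinct: "ccw a b c \<Longrightarrow> a \<noteq> b \<and> b \<noteq> c \<and> a \<noteq> c"
  by (auto simp: ccw_iff_boundary_angle)

lemma ccw_rotate: "ccw a b c \<Longrightarrow> ccw b c a"
  by (auto simp: ccw_def)

lemma ccw_asym: "ccw a b c \<Longrightarrow> \<not> ccw a c b"
  unfolding ccw_iff_boundary_angle by linarith

lemma ccw_cases: "a \<noteq> b \<Longrightarrow> b \<noteq> c \<Longrightarrow> a \<noteq> c \<Longrightarrow> ccw a b c \<or> ccw a c b"
  unfolding ccw_as_angles by linarith

lemma ccw_arc_trans:
  assumes "ccw q c r"
  shows "ccw c w r \<Longrightarrow> ccw q w r" and "ccw q w c \<Longrightarrow> ccw q w r"
  using assms unfolding ccw_iff_boundary_angle by linarith+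

lemma arcs_eq:
  assumes "ccw q c r" "ccw y c z" "\<not> ccw q y r" "\<not> ccw q z r" "\<not> ccw y q z" "\<not> ccw y r z"
  shows "q = y \<and> r = z"
  using assms unfolding ccw_as_angles by smt

definition det2 :: "int \<times> int \<Rightarrow> int \<times> int \<Rightarrow> int" where
  "det2 u v = fst u * snd v - snd u * fst v"

lemma det2_antisym: "det2 u v = - det2 v u"
  by (simp add: det2_def)

lemma det2_pluecker: "det2 a b * det2 c d = det2 c b * det2 a d + det2 a c * det2 b d"
  by (simp add: det2_def algebra_simps)

lemma farey_adj_iff_det2: "farey_adj a b \<longleftrightarrow> \<bar>det2 (fcoord a) (fcoord b)\<bar> = 1"
  by (simp add: farey_adj_def det2_def split: prod.splits)

lemma farey_adj_sym: "farey_adj a b \<longleftrightarrow> farey_adj b a"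
  by (simp add: farey_adj_iff_det2 det2_antisym[of "fcoord a"])

lemma qlt_iff_det2_neg: "qlt a b \<longleftrightarrow> det2 (fcoord a) (fcoord b) < 0"
proof (cases a; cases b)
  fix x y assume ab: "a = Some x" "b = Some y"
  obtain p q r s where pq: "quotient_of x = (p, q)" and rs: "quotient_of y = (r, s)"
    by fastforce
  have "q > 0" "s > 0" using pq rs quotient_of_denom_pos by blast+
  moreover have "x = of_int p / of_int q" "y = of_int r / of_int s"
    using pq rs quotient_of_div by blast+
  ultimately have "x < y \<longleftrightarrow> p * s < r * q"
    by (simp add: divide_less_eq less_divide_eq mult.commute mult.left_commute flip: of_int_mult)
  then show ?thesis using ab pq rs by (simp add: qlt_def det2_def fcoord_def mult.commute)
qed (auto simp: qlt_def det2_def fcoord_def quotient_of_denom_pos' split: prod.splits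
    dest: order.asym[OF quotient_of_denom_pos'])

text \<open>Two Farey edges never cross: the Pluecker relation writes the unimodular determinant
  of one edge as a sum of two products whose signs agree when the edges interleave.\<close>
lemma farey_edges_no_crossing_linear:
  assumes "farey_adj a b" "farey_adj c d" "qlt a c" "qlt c b" "qlt d a \<or> qlt b d"
  shows False
proof -
  define A B C D where "A = fcoord a" and "B = fcoord b" and "C = fcoord c" and "D = fcoord d"
  have "qlt a b" using assms(3,4) by (simp add: qlt_iff_boundary_angle)
  then have "det2 A B = -1"
    using assms(1) by (simp add: A_def B_def qlt_iff_det2_neg farey_adj_iff_det2)
  then have sum: "- det2 C D = det2 C B * det2 A D + det2 A C * det2 B D"
    using det2_pluecker[of A B C D] by simp
  have CD: "\<bar>det2 C D\<bar> = 1" using assms(2) by (simp add: C_def D_def farey_adj_iff_det2)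
  have CB: "det2 C B < 0" and AC: "det2 A C < 0"
    using assms(3,4) by (simp_all add: A_def B_def C_def qlt_iff_det2_neg)
  consider "qlt a d" "qlt b d" | "qlt d a" "qlt d b"
    using assms \<open>qlt a b\<close> by (auto simp: qlt_iff_boundary_angle)
  then show False
  proof cases
    case 1
    then have "det2 A D < 0" "det2 B D < 0" by (simp_all add: A_def B_def D_def qlt_iff_det2_neg)
    then show False
      using sum CD CB AC mult_neg_neg[of "det2 C B" "det2 A D"]
        mult_neg_neg[of "det2 A C" "det2 B D"] by linarith
  next
    case 2
    then have "det2 A D > 0" "det2 B D > 0"
      by (simp_all add: A_def B_def D_def qlt_iff_det2_neg
          det2_antisym[of "fcoord a"] det2_antisym[of "fcoord b"])
    then show False
      using sum CD CB AC mult_neg_pos[of "det2 C B" "det2 A D"]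
        mult_neg_pos[of "det2 A C" "det2 B D"] by linarith
  qed
qed

lemma farey_edges_no_crossing:
  assumes "farey_adj a b" "farey_adj c d" "ccw a c b" "ccw b d a"
  shows False
  using assms farey_edges_no_crossing_linear[OF assms(1,2)]
    farey_edges_no_crossing_linear[OF assms(1,2)[unfolded farey_adj_sym[of a] farey_adj_sym[of c]]]
  unfolding ccw_def by (auto simp: qlt_iff_boundary_angle)

lemma tribone_rotate: "tribone x y z \<Longrightarrow> tribone y z x"
  by (simp add: tribone_def ccw_rotate)

lemma tribone_distinct: "tribone x y z \<Longrightarrow> x \<noteq> y \<and> y \<noteq> z \<and> x \<noteq> z"
  unfolding tribone_def using ccw_distinct by blast

lemma tribone_apex_unique:
  assumes "tribone x y z" "tribone x' y z"
  shows "x = x'"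
proof (rule ccontr)
  assume "x \<noteq> x'"
  moreover have "ccw z x y" "ccw z x' y" using assms by (simp_all add: tribone_def ccw_rotate)
  ultimately consider "ccw z x x'" | "ccw z x' x" using ccw_cases ccw_distinct by metis
  then show False
  proof cases
    case 1
    then show False using assms farey_edges_no_crossing[of z x' x y]
      by (simp add: tribone_def ccw_rotate)
  next
    case 2
    then show False using assms farey_edges_no_crossing[of z x x' y]
      by (simp add: tribone_def ccw_rotate)
  qed
qed

lemma tribone_same_vertices:
  assumes "tribone x y z" "tribone x' y' z'" "{x', y', z'} = {x, y, z}"
  shows "(x', y', z') \<in> {(x, y, z), (y, z, x), (z, x, y)}"
proof -
  have "\<not> ccw x z y" "\<not> ccw y x z" "\<not> ccw z y x"
    using assms(1) unfolding tribone_def ccw_iff_boundary_angle by linarith+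
  moreover have "x' \<in> {x, y, z}" "y' \<in> {x, y, z}" "z' \<in> {x, y, z}" using assms(3) by blast+
  moreover have "ccw x' y' z'" using assms(2) by (simp add: tribone_def)
  ultimately show ?thesis using tribone_distinct[OF assms(2)] by auto
qed

lemma quadribone_distinct:
  "quadribone x y z b \<Longrightarrow> x \<noteq> y \<and> y \<noteq> z \<and> x \<noteq> z \<and> b \<noteq> x \<and> b \<noteq> y \<and> b \<noteq> z"
  unfolding quadribone_def tribone_def by (metis ccw_asym ccw_distinct ccw_rotate)

lemma quadribone_adj_middle:
  assumes "quadribone x y z b" "v \<in> {y, z}" "w \<in> {x, y, z, b}" "w \<noteq> v"
  shows "farey_adj v w"
  using assms unfolding quadribone_def tribone_def by (auto simp: farey_adj_sym)

lemma farey_neighbour_in_arc: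
  assumes "farey_adj q r" "ccw q c r" "farey_adj c w" "w \<noteq> c" "\<not> ccw q w r"
  shows "w = q \<or> w = r"
proof (rule ccontr)
  assume "\<not> (w = q \<or> w = r)"
  then have "ccw r w q" using assms(2,4,5) unfolding ccw_as_angles by linarith
  then show False using farey_edges_no_crossing[OF assms(1,3,2)] by blast
qed

section \<open>Ears of Farey-convex sets\<close>

text \<open>Every side yz of C whose outer Farey triangle (a, z, y) is not contained in C cuts off an
  arc of the circle (the one containing a) which contains no point of C.\<close>
definition farey_convex :: "qp1 set \<Rightarrow> bool" where
  "farey_convex C \<longleftrightarrow>
     (\<forall>a y z w. a \<notin> C \<longrightarrow> y \<in> C \<longrightarrow> z \<in> C \<longrightarrow> w \<in> C \<longrightarrow> tribone a z y \<longrightarrow> \<not> ccw y w z)"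

lemma farey_convexD:
  "farey_convex C \<Longrightarrow> a \<notin> C \<Longrightarrow> y \<in> C \<Longrightarrow> z \<in> C \<Longrightarrow> w \<in> C \<Longrightarrow> tribone a z y \<Longrightarrow> \<not> ccw y w z"
  unfolding farey_convex_def by blast

text \<open>The triangle (b, z, y) is a leaf of C, glued along yz to the triangle (x, y, z):
  b is the only point of C on its side of yz.\<close>
definition ear :: "qp1 set \<Rightarrow> qp1 \<Rightarrow> qp1 \<Rightarrow> qp1 \<Rightarrow> qp1 \<Rightarrow> bool" where
  "ear C x y z b \<longleftrightarrow> quadribone x y z b \<and> {x, y, z, b} \<subseteq> C \<and> (\<forall>w\<in>C. ccw y w z \<longrightarrow> w = b)"

lemma ear_subset: "ear C x y z b \<Longrightarrow> {x, y, z, b} \<subseteq> C' \<Longrightarrow> C' \<subseteq> C \<Longrightarrow> ear C' x y z b"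
  unfolding ear_def by blast

lemma ear_card:
  assumes "finite C" "ear C x y z b"
  shows "4 \<le> card C"
proof -
  have "quadribone x y z b" and sub: "{x, y, z, b} \<subseteq> C" using assms(2) by (simp_all add: ear_def)
  then have "card {x, y, z, b} = 4" using quadribone_distinct by fastforce
  moreover have "card {x, y, z, b} \<le> card C" using assms(1) sub by (rule card_mono)
  ultimately show ?thesis by simp
qed

lemma ear_neighbour:
  assumes "ear C p q r c" "w \<in> C" "farey_adj c w" "w \<noteq> c"
  shows "w = q \<or> w = r"
proof -
  have "tribone c r q" using assms(1) by (simp add: ear_def quadribone_def)
  then have "farey_adj q r" "ccw q c r" by (simp_all add: tribone_def farey_adj_sym ccw_rotate)
  then show ?thesis using farey_neighbour_in_arc assms unfolding ear_def by blast
qed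

lemma ear_unique:
  assumes "ear C x y z b" "ear C x' y' z' b"
  shows "x' = x \<and> y' = y \<and> z' = z"
proof -
  have "ccw y b z" "ccw y' b z'" "y \<noteq> b" "z \<noteq> b" "y' \<noteq> b" "z' \<noteq> b"
    using assms quadribone_distinct unfolding ear_def quadribone_def tribone_def
    by (metis ccw_rotate)+
  then have "y' = y \<and> z' = z" using assms arcs_eq[of y b z y' z'] unfolding ear_def by auto
  then show ?thesis
    using assms tribone_apex_unique[of x y z x'] by (simp add: ear_def quadribone_def)
qed

lemma ear_apex_in_base:
  assumes b: "ear C x y z b" and c: "ear C p q r c" and "b \<noteq> c" "c \<in> {x, y, z}"
  shows "c = x \<and> y = r \<and> z = q \<and> b = p"
proof -
  have qb: "quadribone x y z b" and sub: "{x, y, z, b} \<subseteq> C" using b by (simp_all add: ear_def)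
  then have xyz: "tribone x y z" and bzy: "tribone b z y" by (simp_all add: quadribone_def)
  have cqr: "tribone c r q" "tribone p q r" using c by (simp_all add: ear_def quadribone_def)
  have nbr: "w \<in> {q, r}" if "w \<in> C" "farey_adj c w" "w \<noteq> c" for w
    using ear_neighbour[OF c that] by blast
  have dist: "x \<noteq> y" "y \<noteq> z" "x \<noteq> z" "b \<noteq> x" "b \<noteq> y" "b \<noteq> z"
    using quadribone_distinct[OF qb] by auto
  have "c \<notin> {y, z}"
    \<comment> \<open>y and z have three Farey neighbours among x, y, z, b; an ear apex has only two in C\<close>
  proof
    assume middle: "c \<in> {y, z}"
    have "{x, y, z, b} - {c} \<subseteq> {q, r}"
      using nbr quadribone_adj_middle[OF qb middle] sub by blast
    then have "card ({x, y, z, b} - {c}) \<le> card {q, r}" by (simp add: card_mono)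
    also have "\<dots> \<le> 2" by (simp add: card_insert_if)
    finally show False using middle dist by auto
  qed
  then have cx: "c = x" using assms(4) by blast
  then have "farey_adj c y" "farey_adj c z" using xyz by (metis farey_adj_sym tribone_def)+
  then have "y \<in> {q, r}" "z \<in> {q, r}" using nbr[of y] nbr[of z] sub dist cx by auto
  moreover have "\<not> (y = q \<and> z = r)"
    using xyz cqr(1) cx ccw_asym by (auto simp: tribone_def)
  ultimately have "y = r \<and> z = q" using dist by blast
  moreover then have "b = p" using tribone_apex_unique[of b q r p] bzy cqr by simp
  ultimately show ?thesis using cx by blast
qed

lemma ear_remove_other_ear:
  assumes b: "ear C x y z b" and c: "ear C p q r c" and "b \<noteq> c" "c \<notin> {x, y, z}"
  shows "ear (C - {c}) x y z b" and "b \<notin> {p, q, r}"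
proof -
  have "{x, y, z, b} \<subseteq> C - {c}" using b assms(3,4) by (auto simp: ear_def)
  then show "ear (C - {c}) x y z b" using ear_subset[OF b] by blast
  show "b \<notin> {p, q, r}" using ear_apex_in_base[OF c b] assms(3,4) by blast
qed

lemma opposite_ears_cover:
  assumes c: "ear C p q r c" and p: "ear C c r q p"
  shows "C = {p, q, r, c}"
proof
  show "{p, q, r, c} \<subseteq> C" using assms by (auto simp: ear_def)
  show "C \<subseteq> {p, q, r, c}"
  proof
    fix w assume "w \<in> C"
    moreover have "q \<noteq> r" using c quadribone_distinct unfolding ear_def by blast
    ultimately show "w \<in> {p, q, r, c}"
      using assms ccw_cases[of q w r] ccw_rotate unfolding ear_def by blast
  qed
qed

lemma farey_convex_triangle:
  assumes t: "tribone x y z"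
  shows "farey_convex {x, y, z}"
  unfolding farey_convex_def
proof (intro allI impI)
  fix a y' z' w
  assume a: "a \<notin> {x, y, z}" and y': "y' \<in> {x, y, z}" and z': "z' \<in> {x, y, z}"
    and w: "w \<in> {x, y, z}" and t': "tribone a z' y'"
  have "tribone y z x" "tribone z x y" using t tribone_rotate by blast+
  then have "(y', z') \<notin> {(y, x), (z, y), (x, z)}"
    using t t' a tribone_apex_unique[of a] by auto
  moreover have "y' \<noteq> z'" using t' tribone_distinct by blast
  ultimately show "\<not> ccw y' w z'"
    using y' z' w t tribone_distinct[OF t] unfolding tribone_def ccw_as_angles by auto
qed

lemma ear_insert:
  assumes "farey_convex C" "p \<in> C" "q \<in> C" "r \<in> C" "c \<notin> C" "quadribone p q r c"
  shows "ear (insert c C) p q r c"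
proof -
  have "tribone c r q" using assms(6) by (simp add: quadribone_def)
  then have "\<not> ccw q w r" if "w \<in> C" for w using farey_convexD[OF assms(1,5,3,4) that] by blast
  then show ?thesis using assms by (auto simp: ear_def)
qed

lemma farey_convex_insert:
  assumes conv: "farey_convex C" and pqr: "p \<in> C" "q \<in> C" "r \<in> C" and c: "c \<notin> C"
    and qb: "quadribone p q r c"
  shows "farey_convex (insert c C)"
  unfolding farey_convex_def
proof (intro allI impI)
  fix a y z w
  assume a: "a \<notin> insert c C" and y: "y \<in> insert c C" and z: "z \<in> insert c C"
    and w: "w \<in> insert c C" and t: "tribone a z y"
  have ear: "ear (insert c C) p q r c" by (rule ear_insert[OF assms])
  have tc: "tribone c r q" using qb by (simp add: quadribone_def)
  have cqr: "ccw q c r" using tc by (simp add: tribone_def ccw_rotate)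
  have beyond: "w' = c" if "w' \<in> insert c C" "ccw q w' r" for w'
    using ear that unfolding ear_def by blast
  have "y \<noteq> z" using t tribone_distinct by blast
  then consider "y \<in> C" "z \<in> C" | "y = c" "z \<in> C" | "z = c" "y \<in> C" using y z by blast
  then show "\<not> ccw y w z"
  proof cases
    case 1
    show ?thesis
    proof
      assume yz: "ccw y w z"
      then have "w = c" using farey_convexD[OF conv _ 1 _ t] a w by auto
      have "\<not> ccw q y r" "\<not> ccw q z r" using beyond 1 c by auto
      moreover have "\<not> ccw y q z" "\<not> ccw y r z" using farey_convexD[OF conv _ 1 _ t] a pqr by auto
      ultimately have "q = y \<and> r = z" using arcs_eq[OF cqr yz[unfolded \<open>w = c\<close>]] by blast
      then have "a = c" using tribone_apex_unique[OF t] tc by simp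
      then show False using a by simp
    qed
  next
    case 2
    then have "farey_adj c z" using t by (metis farey_adj_sym tribone_def)
    then have "z = q \<or> z = r" using ear_neighbour[OF ear] 2 c by blast
    then show ?thesis
    proof
      assume "z = q"
      then have "a = r" using tribone_apex_unique[OF t] tc tribone_rotate 2 by blast
      then show ?thesis using a pqr by simp
    next
      assume "z = r"
      then show ?thesis using beyond w ccw_arc_trans(1)[OF cqr] ccw_distinct 2 by blast
    qed
  next
    case 3
    then have "farey_adj c y" using t by (simp add: tribone_def)
    then have "y = q \<or> y = r" using ear_neighbour[OF ear] 3 c by blast
    then show ?thesis
    proof
      assume "y = r"
      then have "a = q" using tribone_apex_unique[OF t] tc tribone_rotate 3 by blast
      then show ?thesis using a pqr by simp
    next
      assume "y = q"
      then show ?thesis using beyond w ccw_arc_trans(2)[OF cqr] ccw_distinct 3 by blast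
    qed
  qed
qed

section \<open>Extending measures along quadribones\<close>

lemma sets_kext: "sets (kext W nu C m x y z a) = sets (PiM (insert a C) (\<lambda>_. W))"
  unfolding kext_def by (simp add: sets.space_closed sets.sigma_sets_eq)

lemma measurable_fun_upd_PiM:
  "f \<in> space (PiM D (\<lambda>_. W)) \<Longrightarrow> (\<lambda>w. f(b := w)) \<in> measurable W (PiM (insert b D) (\<lambda>_. W))"
  by (rule measurable_fun_upd[where J=D]) auto

locale tribone_kernel =
  fixes W :: "'w measure" and nu :: "'w \<times> 'w \<times> 'w \<Rightarrow> 'w measure"
  assumes kernel: "nu \<in> measurable (W \<Otimes>\<^sub>M (W \<Otimes>\<^sub>M W)) (prob_algebra W)"
begin

lemma measurable_nu_vertices:
  assumes "x \<in> D" "y \<in> D" "z \<in> D"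
  shows "(\<lambda>f. nu (f x, f y, f z)) \<in> measurable (PiM D (\<lambda>_. W)) (subprob_algebra W)"
proof -
  have "(\<lambda>f. (f x, f y, f z)) \<in> measurable (PiM D (\<lambda>_. W)) (W \<Otimes>\<^sub>M (W \<Otimes>\<^sub>M W))"
    using assms by measurable
  then show ?thesis using measurable_prob_algebraD[OF kernel] by (rule measurable_compose)
qed

lemma prob_space_nu_vertices:
  assumes "x \<in> D" "y \<in> D" "z \<in> D" "f \<in> space (PiM D (\<lambda>_. W))"
  shows "prob_space (nu (f x, f y, f z))" "sets (nu (f x, f y, f z)) = sets W"
proof -
  have "(f x, f y, f z) \<in> space (W \<Otimes>\<^sub>M (W \<Otimes>\<^sub>M W))"
    using assms by (auto simp: space_pair_measure space_PiM PiE_iff)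
  then have "nu (f x, f y, f z) \<in> space (prob_algebra W)" using measurable_space[OF kernel] by blast
  then show "prob_space (nu (f x, f y, f z))" "sets (nu (f x, f y, f z)) = sets W"
    by (simp_all add: space_prob_algebra)
qed

definition extension_kernel ::
    "qp1 set \<Rightarrow> qp1 \<Rightarrow> qp1 \<Rightarrow> qp1 \<Rightarrow> qp1 \<Rightarrow> (qp1 \<Rightarrow> 'w) \<Rightarrow> (qp1 \<Rightarrow> 'w) measure" where
  "extension_kernel D x y z b f =
     distr (nu (f x, f y, f z)) (PiM (insert b D) (\<lambda>_. W)) (\<lambda>w. f(b := w))"

lemma measurable_extension_kernel:
  assumes "x \<in> D" "y \<in> D" "z \<in> D"
  shows "extension_kernel D x y z b
      \<in> measurable (PiM D (\<lambda>_. W)) (subprob_algebra (PiM (insert b D) (\<lambda>_. W)))"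
proof -
  have "(\<lambda>p. (fst p)(b := snd p)) \<in> measurable (PiM D (\<lambda>_. W) \<Otimes>\<^sub>M W) (PiM (insert b D) (\<lambda>_. W))"
    by (rule measurable_fun_upd[where J=D]) auto
  then have "(\<lambda>(f, w). f(b := w)) \<in> measurable (PiM D (\<lambda>_. W) \<Otimes>\<^sub>M W) (PiM (insert b D) (\<lambda>_. W))"
    by (simp add: case_prod_beta')
  then show ?thesis
    unfolding extension_kernel_def
    by (rule measurable_distr2[OF _ measurable_nu_vertices[OF assms]])
qed

lemma emeasure_extension_kernel:
  assumes "x \<in> D" "y \<in> D" "z \<in> D" "f \<in> space (PiM D (\<lambda>_. W))"
    and "S \<in> sets (PiM (insert b D) (\<lambda>_. W))"
  shows "emeasure (extension_kernel D x y z b f) S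
       = emeasure (nu (f x, f y, f z)) ((\<lambda>w. f(b := w)) -` S \<inter> space W)"
proof -
  have sets_nu: "sets (nu (f x, f y, f z)) = sets W" by (rule prob_space_nu_vertices[OF assms(1-4)])
  have "(\<lambda>w. f(b := w)) \<in> measurable (nu (f x, f y, f z)) (PiM (insert b D) (\<lambda>_. W))"
    using measurable_fun_upd_PiM[OF assms(4)] measurable_cong_sets[OF sets_nu refl] by blast
  then show ?thesis
    using assms(5) sets_eq_imp_space_eq[OF sets_nu]
    by (simp add: extension_kernel_def emeasure_distr)
qed

lemma kext_eq_bind:
  assumes D: "x \<in> D" "y \<in> D" "z \<in> D" and sm: "sets m = sets (PiM D (\<lambda>_. W))"
    and ne: "space m \<noteq> {}"
  shows "kext W nu D m x y z b = m \<bind> extension_kernel D x y z b"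
proof -
  let ?P = "PiM (insert b D) (\<lambda>_. W)"
  have K: "extension_kernel D x y z b \<in> measurable m (subprob_algebra ?P)"
    using measurable_extension_kernel[OF D] measurable_cong_sets[OF sm refl] by blast
  have sets_bind: "sets (m \<bind> extension_kernel D x y z b) = sets ?P"
    using sets_bind[OF sets_kernel[OF K] ne] .
  then have "m \<bind> extension_kernel D x y z b
      = measure_of (space ?P) (sets ?P) (emeasure (m \<bind> extension_kernel D x y z b))"
    by (metis measure_of_of_measure sets_eq_imp_space_eq)
  also have "\<dots> = kext W nu D m x y z b"
    unfolding kext_def
  proof (rule measure_of_eq[OF sets.space_closed])
    fix S assume "S \<in> sigma_sets (space ?P) (sets ?P)"
    then have S: "S \<in> sets ?P" by (simp add: sets.sigma_sets_eq)
    show "emeasure (m \<bind> extension_kernel D x y z b) S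
        = (\<integral>\<^sup>+ f. emeasure (nu (f x, f y, f z)) ((\<lambda>w. f(b := w)) -` S \<inter> space W) \<partial>m)"
      unfolding emeasure_bind[OF ne K S]
      using emeasure_extension_kernel[OF D _ S] sets_eq_imp_space_eq[OF sm]
      by (intro nn_integral_cong) simp
  qed
  finally show ?thesis ..
qed

lemma nn_integral_kext:
  assumes D: "x \<in> D" "y \<in> D" "z \<in> D" and sm: "sets m = sets (PiM D (\<lambda>_. W))"
    and h: "h \<in> borel_measurable (PiM (insert b D) (\<lambda>_. W))"
  shows "(\<integral>\<^sup>+ g. h g \<partial>kext W nu D m x y z b) = (\<integral>\<^sup>+ f. \<integral>\<^sup>+ w. h (f(b := w)) \<partial>nu (f x, f y, f z) \<partial>m)"
proof (cases "space m = {}")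
  case True
  then have "space W = {}"
    using D(1) sets_eq_imp_space_eq[OF sm] by (auto simp: space_PiM PiE_eq_empty_iff)
  moreover have "space (kext W nu D m x y z b) = space (PiM (insert b D) (\<lambda>_. W))"
    by (rule sets_eq_imp_space_eq[OF sets_kext])
  ultimately have "space (kext W nu D m x y z b) = {}" by (auto simp: space_PiM PiE_eq_empty_iff)
  then show ?thesis using True by (simp add: nn_integral_empty)
next
  case False
  have K: "extension_kernel D x y z b \<in> measurable m (subprob_algebra (PiM (insert b D) (\<lambda>_. W)))"
    using measurable_extension_kernel[OF D] measurable_cong_sets[OF sm refl] by blast
  show ?thesis
    unfolding kext_eq_bind[OF D sm False] nn_integral_bind[OF h K]
  proof (rule nn_integral_cong)
    fix f assume "f \<in> space m"
    then have f: "f \<in> space (PiM D (\<lambda>_. W))" using sets_eq_imp_space_eq[OF sm] by simp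
    have "sets (nu (f x, f y, f z)) = sets W" by (rule prob_space_nu_vertices[OF D f])
    then have "(\<lambda>w. f(b := w)) \<in> measurable (nu (f x, f y, f z)) (PiM (insert b D) (\<lambda>_. W))"
      using measurable_fun_upd_PiM[OF f] measurable_cong_sets by blast
    then show "integral\<^sup>N (extension_kernel D x y z b f) h
        = (\<integral>\<^sup>+ w. h (f(b := w)) \<partial>nu (f x, f y, f z))"
      unfolding extension_kernel_def using h by (simp add: nn_integral_distr)
  qed
qed

lemma emeasure_kext:
  assumes "x \<in> D" "y \<in> D" "z \<in> D" "sets m = sets (PiM D (\<lambda>_. W))"
    and S: "S \<in> sets (PiM (insert b D) (\<lambda>_. W))"
  shows "emeasure (kext W nu D m x y z b) S
       = (\<integral>\<^sup>+ f. \<integral>\<^sup>+ w. indicator S (f(b := w)) \<partial>nu (f x, f y, f z) \<partial>m)"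
  using nn_integral_kext[OF assms(1-4) borel_measurable_indicator[OF S]] S
  by (simp add: sets_kext)

lemma measurable_nn_integral_extension:
  assumes "p \<in> D" "q \<in> D" "r \<in> D" and S: "S \<in> sets (PiM (insert c D) (\<lambda>_. W))"
  shows "(\<lambda>g. \<integral>\<^sup>+ w. indicator S (g(c := w)) \<partial>nu (g p, g q, g r)) \<in> borel_measurable (PiM D (\<lambda>_. W))"
proof -
  have "(\<lambda>u. (fst u)(c := snd u)) \<in> measurable (PiM D (\<lambda>_. W) \<Otimes>\<^sub>M W) (PiM (insert c D) (\<lambda>_. W))"
    by (rule measurable_fun_upd[where J=D]) auto
  from measurable_compose[OF this borel_measurable_indicator[OF S]]
  have "(\<lambda>(g, w). indicator S (g(c := w)) :: ennreal) \<in> borel_measurable (PiM D (\<lambda>_. W) \<Otimes>\<^sub>M W)"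
    by (simp add: case_prod_beta')
  from nn_integral_measurable_subprob_algebra2[OF this measurable_nu_vertices[OF assms(1-3)]]
  show ?thesis by simp
qed

lemma emeasure_kext_kext:
  assumes D1: "x \<in> D" "y \<in> D" "z \<in> D" and D2: "p \<in> D" "q \<in> D" "r \<in> D"
    and b: "b \<notin> D" and sm: "sets m = sets (PiM D (\<lambda>_. W))"
    and S: "S \<in> sets (PiM (insert c (insert b D)) (\<lambda>_. W))"
  shows "emeasure (kext W nu (insert b D) (kext W nu D m x y z b) p q r c) S
       = (\<integral>\<^sup>+ f. \<integral>\<^sup>+ w. \<integral>\<^sup>+ w'. indicator S (f(b := w, c := w'))
            \<partial>nu (f p, f q, f r) \<partial>nu (f x, f y, f z) \<partial>m)"
proof -
  have D2': "p \<in> insert b D" "q \<in> insert b D" "r \<in> insert b D" using D2 by auto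
  have "(\<lambda>g. \<integral>\<^sup>+ w'. indicator S (g(c := w')) \<partial>nu (g p, g q, g r))
      \<in> borel_measurable (PiM (insert b D) (\<lambda>_. W))"
    by (rule measurable_nn_integral_extension[OF D2' S])
  moreover have "p \<noteq> b" "q \<noteq> b" "r \<noteq> b" using b D2 by auto
  ultimately show ?thesis
    using emeasure_kext[OF D2' sets_kext S] nn_integral_kext[OF D1 sm] by simp
qed

lemma kext_commute:
  assumes D1: "x \<in> D" "y \<in> D" "z \<in> D" and D2: "p \<in> D" "q \<in> D" "r \<in> D"
    and bc: "b \<notin> D" "c \<notin> D" "b \<noteq> c" and sm: "sets m = sets (PiM D (\<lambda>_. W))"
  shows "kext W nu (insert b D) (kext W nu D m x y z b) p q r c
       = kext W nu (insert c D) (kext W nu D m p q r c) x y z b"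
proof (rule measure_eqI)
  show "sets (kext W nu (insert b D) (kext W nu D m x y z b) p q r c)
      = sets (kext W nu (insert c D) (kext W nu D m p q r c) x y z b)"
    by (simp add: sets_kext insert_commute)
  fix S assume "S \<in> sets (kext W nu (insert b D) (kext W nu D m x y z b) p q r c)"
  then have S: "S \<in> sets (PiM (insert c (insert b D)) (\<lambda>_. W))" by (simp add: sets_kext)
  then have S': "S \<in> sets (PiM (insert b (insert c D)) (\<lambda>_. W))" by (simp add: insert_commute)
  show "emeasure (kext W nu (insert b D) (kext W nu D m x y z b) p q r c) S
      = emeasure (kext W nu (insert c D) (kext W nu D m p q r c) x y z b) S"
    unfolding emeasure_kext_kext[OF D1 D2 bc(1) sm S] emeasure_kext_kext[OF D2 D1 bc(2) sm S']
  proof (rule nn_integral_cong)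
    fix f assume "f \<in> space m"
    then have f: "f \<in> space (PiM D (\<lambda>_. W))" using sets_eq_imp_space_eq[OF sm] by simp
    interpret N1: prob_space "nu (f x, f y, f z)" using prob_space_nu_vertices[OF D1 f] by simp
    interpret N2: prob_space "nu (f p, f q, f r)" using prob_space_nu_vertices[OF D2 f] by simp
    interpret pair_prob_space "nu (f x, f y, f z)" "nu (f p, f q, f r)" ..
    have "(\<lambda>u. f(b := fst u, c := snd u))
        \<in> measurable (W \<Otimes>\<^sub>M W) (PiM (insert c (insert b D)) (\<lambda>_. W))"
      by (rule measurable_fun_upd[where J="insert b D"], simp, rule measurable_fun_upd[where J=D])
        (use f in auto)
    from measurable_compose[OF this borel_measurable_indicator[OF S]]
    have "(\<lambda>(w, w'). indicator S (f(b := w, c := w')) :: ennreal)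
        \<in> borel_measurable (nu (f x, f y, f z) \<Otimes>\<^sub>M nu (f p, f q, f r))"
      using sets_pair_measure_cong[OF prob_space_nu_vertices(2)[OF D1 f]
          prob_space_nu_vertices(2)[OF D2 f]]
      by (simp add: case_prod_beta' cong: measurable_cong_sets)
    from Fubini'[OF this]
    show "(\<integral>\<^sup>+ w. \<integral>\<^sup>+ w'. indicator S (f(b := w, c := w')) \<partial>nu (f p, f q, f r) \<partial>nu (f x, f y, f z))
        = (\<integral>\<^sup>+ w'. \<integral>\<^sup>+ w. indicator S (f(c := w', b := w)) \<partial>nu (f x, f y, f z) \<partial>nu (f p, f q, f r))"
      using bc(3) by (simp add: fun_upd_twist)
  qed
qed

end

definition tri_assign :: "qp1 \<Rightarrow> qp1 \<Rightarrow> qp1 \<Rightarrow> 'w \<times> 'w \<times> 'w \<Rightarrow> qp1 \<Rightarrow> 'w" where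
  "tri_assign x y z = (\<lambda>(p, q, r). \<lambda>i\<in>{x, y, z}. if i = x then p else if i = y then q else r)"

definition quad_assign :: "qp1 \<Rightarrow> qp1 \<Rightarrow> qp1 \<Rightarrow> qp1 \<Rightarrow> 'w \<times> 'w \<times> 'w \<times> 'w \<Rightarrow> qp1 \<Rightarrow> 'w" where
  "quad_assign x y z a = (\<lambda>(p, q, r, d). (tri_assign x y z (p, q, r))(a := d))"

lemma tri_init_eq_distr:
  "tri_init W mu3 x y z = distr mu3 (PiM {x, y, z} (\<lambda>_. W)) (tri_assign x y z)"
  by (simp add: tri_init_def tri_assign_def)

lemma measurable_tri_assign:
  "tri_assign x y z \<in> measurable (W \<Otimes>\<^sub>M (W \<Otimes>\<^sub>M W)) (PiM {x, y, z} (\<lambda>_. W))"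
proof -
  have "(\<lambda>t. \<lambda>i\<in>{x, y, z}. if i = x then fst t else if i = y then fst (snd t) else snd (snd t))
     \<in> measurable (W \<Otimes>\<^sub>M (W \<Otimes>\<^sub>M W)) (PiM {x, y, z} (\<lambda>_. W))"
    by (rule measurable_restrict) auto
  then show ?thesis by (simp add: tri_assign_def case_prod_beta')
qed

lemma measurable_quad_assign:
  "quad_assign x y z a \<in> measurable (W \<Otimes>\<^sub>M (W \<Otimes>\<^sub>M (W \<Otimes>\<^sub>M W))) (PiM (insert a {x, y, z}) (\<lambda>_. W))"
proof -
  have "(\<lambda>u. tri_assign x y z (fst u, fst (snd u), fst (snd (snd u))))
      \<in> measurable (W \<Otimes>\<^sub>M (W \<Otimes>\<^sub>M (W \<Otimes>\<^sub>M W))) (PiM {x, y, z} (\<lambda>_. W))"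
    by (rule measurable_compose[OF _ measurable_tri_assign]) simp
  then have "(\<lambda>u. (tri_assign x y z (fst u, fst (snd u), fst (snd (snd u))))
        (a := snd (snd (snd u))))
      \<in> measurable (W \<Otimes>\<^sub>M (W \<Otimes>\<^sub>M (W \<Otimes>\<^sub>M W))) (PiM (insert a {x, y, z}) (\<lambda>_. W))"
    by (rule measurable_fun_upd[rotated]) auto
  then show ?thesis by (simp add: quad_assign_def case_prod_beta')
qed

section \<open>Uniqueness of the constructed measures\<close>

lemma sets_mu_build: "mu_build W mu3 nu u C m \<Longrightarrow> sets m = sets (PiM C (\<lambda>_. W))"
  by (induction rule: mu_build.induct) (simp_all add: tri_init_eq_distr sets_kext)

lemma card_mu_build: "mu_build W mu3 nu u C m \<Longrightarrow> finite C \<and> 3 \<le> card C"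
  by (induction rule: mu_build.induct) (auto dest: tribone_distinct)

lemma farey_convex_mu_build: "mu_build W mu3 nu u C m \<Longrightarrow> farey_convex C"
  by (induction rule: mu_build.induct) (auto intro: farey_convex_triangle farey_convex_insert)

locale configuration_data = tribone_kernel W nu
  for W :: "'w measure" and nu :: "'w \<times> 'w \<times> 'w \<Rightarrow> 'w measure" +
  fixes mu3 :: "('w \<times> 'w \<times> 'w) measure" and mu4 :: "('w \<times> 'w \<times> 'w \<times> 'w) measure"
  assumes sets3: "sets mu3 = sets (W \<Otimes>\<^sub>M (W \<Otimes>\<^sub>M W))"
    and sets4: "sets mu4 = sets (W \<Otimes>\<^sub>M (W \<Otimes>\<^sub>M (W \<Otimes>\<^sub>M W)))"
    and cyclic: "distr mu3 (W \<Otimes>\<^sub>M (W \<Otimes>\<^sub>M W)) (\<lambda>(a, b, c). (b, c, a)) = mu3"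
    and reverse: "distr mu4 (W \<Otimes>\<^sub>M (W \<Otimes>\<^sub>M (W \<Otimes>\<^sub>M W))) (\<lambda>(a, b, c, d). (d, c, b, a)) = mu4"
    and disint: "\<forall>S \<in> sets (W \<Otimes>\<^sub>M (W \<Otimes>\<^sub>M (W \<Otimes>\<^sub>M W))).
       emeasure mu4 S = (\<integral>\<^sup>+ t. emeasure (nu t)
          {d \<in> space W. (fst t, fst (snd t), snd (snd t), d) \<in> S} \<partial>mu3)"
begin

lemma tri_init_rotate:
  assumes "x \<noteq> y" "y \<noteq> z" "x \<noteq> z"
  shows "tri_init W mu3 x y z = tri_init W mu3 z x y"
proof -
  have rot: "(\<lambda>(a, b, c). (b, c, a)) \<in> measurable mu3 (W \<Otimes>\<^sub>M (W \<Otimes>\<^sub>M W))"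
    unfolding measurable_cong_sets[OF sets3 refl] by measurable
  have "tri_init W mu3 x y z
      = distr (distr mu3 (W \<Otimes>\<^sub>M (W \<Otimes>\<^sub>M W)) (\<lambda>(a, b, c). (b, c, a)))
          (PiM {x, y, z} (\<lambda>_. W)) (tri_assign x y z)"
    by (simp add: tri_init_eq_distr cyclic)
  also have "\<dots> = distr mu3 (PiM {x, y, z} (\<lambda>_. W)) (tri_assign x y z \<circ> (\<lambda>(a, b, c). (b, c, a)))"
    by (rule distr_distr[OF measurable_tri_assign rot])
  also have "\<dots> = distr mu3 (PiM {z, x, y} (\<lambda>_. W)) (tri_assign z x y)"
    using assms by (intro distr_cong) (auto simp: tri_assign_def insert_commute fun_eq_iff)
  finally show ?thesis by (simp add: tri_init_eq_distr)
qed

lemma tri_init_same_vertices: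
  assumes "tribone x y z" "tribone x' y' z'" "{x', y', z'} = {x, y, z}"
  shows "tri_init W mu3 x' y' z' = tri_init W mu3 x y z"
proof -
  have "x \<noteq> y" "y \<noteq> z" "x \<noteq> z" using assms(1) tribone_distinct by blast+
  then have "tri_init W mu3 x y z = tri_init W mu3 z x y"
    and "tri_init W mu3 y z x = tri_init W mu3 x y z"
    using tri_init_rotate[of x y z] tri_init_rotate[of y z x] by auto
  then show ?thesis using tribone_same_vertices[OF assms] by auto
qed

lemma emeasure_mu4_iterated:
  assumes S: "S \<in> sets (W \<Otimes>\<^sub>M (W \<Otimes>\<^sub>M (W \<Otimes>\<^sub>M W)))"
  shows "emeasure mu4 S = (\<integral>\<^sup>+ t. \<integral>\<^sup>+ d. indicator S (fst t, fst (snd t), snd (snd t), d) \<partial>nu t \<partial>mu3)"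
  unfolding disint[rule_format, OF S]
proof (rule nn_integral_cong)
  fix t assume "t \<in> space mu3"
  then have t: "t \<in> space (W \<Otimes>\<^sub>M (W \<Otimes>\<^sub>M W))" using sets_eq_imp_space_eq[OF sets3] by simp
  then have sets_nu: "sets (nu t) = sets W"
    using measurable_space[OF kernel t] by (simp add: space_prob_algebra)
  have "(\<lambda>d. (fst t, fst (snd t), snd (snd t), d)) \<in> measurable W (W \<Otimes>\<^sub>M (W \<Otimes>\<^sub>M (W \<Otimes>\<^sub>M W)))"
    using t by (auto simp: space_pair_measure)
  from measurable_sets[OF this S]
  have "{d \<in> space W. (fst t, fst (snd t), snd (snd t), d) \<in> S} \<in> sets (nu t)"
    by (simp add: sets_nu vimage_def Int_def conj_commute)
  from nn_integral_indicator[OF this, symmetric]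
  show "emeasure (nu t) {d \<in> space W. (fst t, fst (snd t), snd (snd t), d) \<in> S}
      = (\<integral>\<^sup>+ d. indicator S (fst t, fst (snd t), snd (snd t), d) \<partial>nu t)"
    using sets_eq_imp_space_eq[OF sets_nu]
    by (auto intro!: nn_integral_cong simp: indicator_def)
qed

lemma kext_tri_init:
  assumes d: "x \<noteq> y" "y \<noteq> z" "x \<noteq> z"
  shows "kext W nu {x, y, z} (tri_init W mu3 x y z) x y z a
       = distr mu4 (PiM (insert a {x, y, z}) (\<lambda>_. W)) (quad_assign x y z a)"
proof (rule measure_eqI)
  let ?W3 = "W \<Otimes>\<^sub>M (W \<Otimes>\<^sub>M W)" and ?W4 = "W \<Otimes>\<^sub>M (W \<Otimes>\<^sub>M (W \<Otimes>\<^sub>M W))"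
  show sets_eq: "sets (kext W nu {x, y, z} (tri_init W mu3 x y z) x y z a)
      = sets (distr mu4 (PiM (insert a {x, y, z}) (\<lambda>_. W)) (quad_assign x y z a))"
    by (simp add: sets_kext)
  fix S assume "S \<in> sets (kext W nu {x, y, z} (tri_init W mu3 x y z) x y z a)"
  then have S: "S \<in> sets (PiM (insert a {x, y, z}) (\<lambda>_. W))" by (simp add: sets_kext)
  have V: "x \<in> {x, y, z}" "y \<in> {x, y, z}" "z \<in> {x, y, z}" by auto
  have "emeasure (kext W nu {x, y, z} (tri_init W mu3 x y z) x y z a) S
      = (\<integral>\<^sup>+ f. \<integral>\<^sup>+ w. indicator S (f(a := w)) \<partial>nu (f x, f y, f z) \<partial>tri_init W mu3 x y z)"
    by (rule emeasure_kext[OF V _ S]) (simp add: tri_init_eq_distr)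
  also have "\<dots> = (\<integral>\<^sup>+ t. \<integral>\<^sup>+ w. indicator S ((tri_assign x y z t)(a := w))
      \<partial>nu (tri_assign x y z t x, tri_assign x y z t y, tri_assign x y z t z) \<partial>mu3)"
    unfolding tri_init_eq_distr
    by (rule nn_integral_distr)
      (use measurable_tri_assign measurable_cong_sets[OF sets3 refl] in blast,
       simp add: measurable_nn_integral_extension[OF V S])
  also have "\<dots> = (\<integral>\<^sup>+ t. \<integral>\<^sup>+ w. indicator (quad_assign x y z a -` S \<inter> space ?W4)
      (fst t, fst (snd t), snd (snd t), w) \<partial>nu t \<partial>mu3)"
  proof (rule nn_integral_cong)
    fix t assume "t \<in> space mu3"
    then have t: "t \<in> space ?W3" using sets_eq_imp_space_eq[OF sets3] by simp
    then have "sets (nu t) = sets W"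
      using measurable_space[OF kernel t] by (simp add: space_prob_algebra)
    then have "space (nu t) = space W" by (rule sets_eq_imp_space_eq)
    then show "(\<integral>\<^sup>+ w. indicator S ((tri_assign x y z t)(a := w))
        \<partial>nu (tri_assign x y z t x, tri_assign x y z t y, tri_assign x y z t z))
      = (\<integral>\<^sup>+ w. indicator (quad_assign x y z a -` S \<inter> space ?W4)
        (fst t, fst (snd t), snd (snd t), w) \<partial>nu t)"
      using t d by (cases t) (auto intro!: nn_integral_cong simp: tri_assign_def quad_assign_def
          space_pair_measure indicator_def)
  qed
  also have "\<dots> = emeasure mu4 (quad_assign x y z a -` S \<inter> space ?W4)"
    by (rule emeasure_mu4_iterated[symmetric]) (rule measurable_sets[OF measurable_quad_assign S])
  also have "\<dots> = emeasure (distr mu4 (PiM (insert a {x, y, z}) (\<lambda>_. W)) (quad_assign x y z a)) S"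
  proof -
    have "quad_assign x y z a \<in> measurable mu4 (PiM (insert a {x, y, z}) (\<lambda>_. W))"
      using measurable_quad_assign measurable_cong_sets[OF sets4 refl] by blast
    then show ?thesis using S by (simp add: emeasure_distr sets_eq_imp_space_eq[OF sets4])
  qed
  finally show "emeasure (kext W nu {x, y, z} (tri_init W mu3 x y z) x y z a) S
      = emeasure (distr mu4 (PiM (insert a {x, y, z}) (\<lambda>_. W)) (quad_assign x y z a)) S" .
qed

lemma kext_tri_init_flip:
  assumes "x \<noteq> y" "y \<noteq> z" "x \<noteq> z" "a \<noteq> x" "a \<noteq> y" "a \<noteq> z"
  shows "kext W nu {x, y, z} (tri_init W mu3 x y z) x y z a
       = kext W nu {a, z, y} (tri_init W mu3 a z y) a z y x"
proof -
  let ?W4 = "W \<Otimes>\<^sub>M (W \<Otimes>\<^sub>M (W \<Otimes>\<^sub>M W))" and ?rev = "\<lambda>(a, b, c, d). (d, c, b, a)"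
  have rev: "?rev \<in> measurable mu4 ?W4"
    unfolding measurable_cong_sets[OF sets4 refl] by measurable
  have vertices: "insert x {a, z, y} = insert a {x, y, z}" by auto
  have "kext W nu {a, z, y} (tri_init W mu3 a z y) a z y x
      = distr (distr mu4 ?W4 ?rev) (PiM (insert x {a, z, y}) (\<lambda>_. W)) (quad_assign a z y x)"
    using assms by (simp add: kext_tri_init reverse)
  also have "\<dots> = distr mu4 (PiM (insert x {a, z, y}) (\<lambda>_. W)) (quad_assign a z y x \<circ> ?rev)"
    by (rule distr_distr[OF measurable_quad_assign rev])
  also have "\<dots> = distr mu4 (PiM (insert a {x, y, z}) (\<lambda>_. W)) (quad_assign x y z a)"
    unfolding vertices using assms
    by (intro distr_cong) (auto simp: quad_assign_def tri_assign_def fun_eq_iff)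
  finally show ?thesis using assms by (simp add: kext_tri_init)
qed

lemma mu_build_triangle:
  "mu_build W mu3 nu u C m \<Longrightarrow> tribone x y z \<Longrightarrow> C = {x, y, z} \<Longrightarrow> m = tri_init W mu3 x y z"
proof (induction rule: mu_build.induct)
  case (base x' y' z')
  then show ?case using tri_init_same_vertices[OF base.prems(1) base.hyps(1)] by simp
next
  case (step C m p q r a)
  have "card (insert a C) \<ge> 4" using card_mu_build[OF step.hyps(1)] step.hyps(5) by simp
  moreover have "card {x, y, z} \<le> 3" by (simp add: card_insert_le_m1)
  ultimately show ?case using step.prems(2) by simp
qed

lemma mu_build_remove_ear:
  assumes "mu_build W mu3 nu u C m" "ear C x y z b" "4 \<le> card C"
  shows "\<exists>u' m'. mu_build W mu3 nu u' (C - {b}) m' \<and> m = kext W nu (C - {b}) m' x y z b"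
  using assms
proof (induction arbitrary: x y z b rule: mu_build.induct)
  case (base p q r)
  have "card {p, q, r} \<le> 3" by (simp add: card_insert_le_m1)
  then show ?case using base.prems(2) by simp
next
  case (step C0 m0 p q r c)
  let ?C = "insert c C0"
  have ear_c: "ear ?C p q r c"
    by (rule ear_insert[OF farey_convex_mu_build[OF step.hyps(1)] step.hyps(2-6)])
  have pqrc: "p \<noteq> q" "q \<noteq> r" "p \<noteq> r" "c \<noteq> p" "c \<noteq> q" "c \<noteq> r"
    using quadribone_distinct[OF step.hyps(6)] by auto
  consider "c = b" | "c \<noteq> b" "c \<in> {x, y, z}" | "c \<noteq> b" "c \<notin> {x, y, z}" by blast
  then show ?case
  proof cases
    case 1
    then have "x = p \<and> y = q \<and> z = r" using ear_unique[OF step.prems(1)] ear_c by blast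
    moreover have "?C - {b} = C0" using 1 step.hyps(5) by auto
    ultimately show ?thesis using step.hyps(1) 1 by auto
  next
    case 2
    then have flip: "c = x \<and> y = r \<and> z = q \<and> b = p"
      using ear_apex_in_base[OF step.prems(1) ear_c] by blast
    then have "?C = {p, q, r, c}" using opposite_ears_cover[OF ear_c] step.prems(1) by simp
    then have C0: "C0 = {p, q, r}" using step.hyps(2-5) by auto
    have tp: "tribone p q r" "tribone c r q" using step.hyps(6) by (simp_all add: quadribone_def)
    have "kext W nu C0 m0 p q r c = kext W nu {c, r, q} (tri_init W mu3 c r q) c r q p"
      unfolding mu_build_triangle[OF step.hyps(1) tp(1) C0] C0
      by (rule kext_tri_init_flip) (use pqrc in auto)
    moreover have "?C - {b} = {c, r, q}" using flip C0 pqrc by auto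
    moreover have "mu_build W mu3 nu {c, r, q} {c, r, q} (tri_init W mu3 c r q)"
      by (rule mu_build.base[OF tp(2) refl])
    ultimately show ?thesis using flip by auto
  next
    case 3
    have ear_b: "ear C0 x y z b" and b: "b \<notin> {p, q, r}"
      using ear_remove_other_ear[OF step.prems(1) ear_c 3(1)[symmetric] 3(2)] step.hyps(5) by auto
    define D where "D = C0 - {b}"
    have "4 \<le> card C0" using ear_card card_mu_build[OF step.hyps(1)] ear_b by blast
    then obtain u' m0' where IH: "mu_build W mu3 nu u' D m0'" "m0 = kext W nu D m0' x y z b"
      using step.IH[OF ear_b] unfolding D_def by blast
    have "quadribone x y z b" and sub: "{x, y, z, b} \<subseteq> C0" using ear_b by (simp_all add: ear_def)
    then have "b \<noteq> x" "b \<noteq> y" "b \<noteq> z" using quadribone_distinct by blast+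
    then have D: "x \<in> D" "y \<in> D" "z \<in> D" "p \<in> D" "q \<in> D" "r \<in> D" "b \<notin> D" "c \<notin> D"
      using sub step.hyps(2-5) b by (auto simp: D_def)
    have C0: "C0 = insert b D" and C: "?C - {b} = insert c D" using sub 3 by (auto simp: D_def)
    have "kext W nu C0 m0 p q r c = kext W nu (insert c D) (kext W nu D m0' p q r c) x y z b"
      unfolding C0 IH(2) using D 3 by (intro kext_commute sets_mu_build[OF IH(1)]) auto
    moreover have "mu_build W mu3 nu u' (insert c D) (kext W nu D m0' p q r c)"
      by (rule mu_build.step[OF IH(1)]) (use D step.hyps(6) in auto)
    ultimately show ?thesis unfolding C by blast
  qed
qed

lemma mu_build_unique:
  "mu_build W mu3 nu u C m \<Longrightarrow> mu_build W mu3 nu u' C m' \<Longrightarrow> m = m'"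
proof (induction arbitrary: u' m' rule: mu_build.induct)
  case (base x y z)
  then show ?case using mu_build_triangle[OF base.prems base.hyps(1) refl] by simp
next
  case (step C m x y z a)
  have "ear (insert a C) x y z a"
    by (rule ear_insert[OF farey_convex_mu_build[OF step.hyps(1)] step.hyps(2-6)])
  moreover have "4 \<le> card (insert a C)" using card_mu_build[OF step.hyps(1)] step.hyps(5) by simp
  moreover have "insert a C - {a} = C" using step.hyps(5) by simp
  ultimately obtain u'' m'' where "mu_build W mu3 nu u'' C m''" "m' = kext W nu C m'' x y z a"
    using mu_build_remove_ear[OF step.prems] by metis
  then show ?case using step.IH by simp
qed

end

theorem mainTheorem4:
  fixes W :: "'w measure"
    and mu3 :: "('w \<times> 'w \<times> 'w) measure"
    and mu4 :: "('w \<times> 'w \<times> 'w \<times> 'w) measure"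
    and nu :: "'w \<times> 'w \<times> 'w \<Rightarrow> 'w measure"
    and A v w :: "qp1 set"
  assumes sets3: "sets mu3 = sets (W \<Otimes>\<^sub>M (W \<Otimes>\<^sub>M W))"
    and sets4: "sets mu4 = sets (W \<Otimes>\<^sub>M (W \<Otimes>\<^sub>M (W \<Otimes>\<^sub>M W)))"
    and cyclic: "distr mu3 (W \<Otimes>\<^sub>M (W \<Otimes>\<^sub>M W)) (\<lambda>(a, b, c). (b, c, a)) = mu3"
    and reverse: "distr mu4 (W \<Otimes>\<^sub>M (W \<Otimes>\<^sub>M (W \<Otimes>\<^sub>M W))) (\<lambda>(a, b, c, d). (d, c, b, a)) = mu4"
    and proj: "distr mu4 (W \<Otimes>\<^sub>M (W \<Otimes>\<^sub>M W)) (\<lambda>(a, b, c, d). (a, b, c)) = mu3"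
    and kernel: "nu \<in> measurable (W \<Otimes>\<^sub>M (W \<Otimes>\<^sub>M W)) (prob_algebra W)"
    and disint: "\<forall>S \<in> sets (W \<Otimes>\<^sub>M (W \<Otimes>\<^sub>M (W \<Otimes>\<^sub>M W))).
       emeasure mu4 S = (\<integral>\<^sup>+ t. emeasure (nu t)
          {d \<in> space W. (fst t, fst (snd t), snd (snd t), d) \<in> S} \<partial>mu3)"
    and fin: "finite A"
    and conn_v: "vconnected A v"
    and conn_w: "vconnected A w"
  shows "\<forall>m1 m2. mu_build W mu3 nu v A m1 \<and> mu_build W mu3 nu w A m2 \<longrightarrow> m1 = m2"
proof -
  interpret configuration_data W nu mu3 mu4
    using sets3 sets4 cyclic reverse kernel disint by unfold_locales
  show ?thesis using mu_build_unique by blast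
qed

end
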